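(* For positive semidefinite operators $A,B$, $$\mathrm{Tr}\,(A+B)\,\mathcal{R}_{A+B}(A)\ge \mathrm{Tr}\,A\,\mathcal{T}_{A+B}(A).$$
   Context: All operators act on a finite-dimensional complex Hilbert space. For positive semidefinite $M$ and self-adjoint $\Delta$ supported in the support of $M$: $\mathcal{T}_M(\Delta)=\int_0^\infty (M+sI)^{-1}\Delta(M+sI)^{-1}\,ds$ (the first derivative $\frac{d}{dt}|_{t=0}\log(M+t\Delta)$), and $\mathcal{R}_M(\Delta)=2\int_0^\infty (M+sI)^{-1}\Delta(M+sI)^{-1}\Delta(M+sI)^{-1}\,ds$ (which equals $-\frac{d^2}{dt^2}|_{t=0}\log(M+t\Delta)$). *)

theory Defs
  imports "HOL-Analysis.Analysis" "HOL-Library.Complex_Order"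
begin

text \<open>Positive semidefinite: the quadratic form x* A x is a nonnegative real
  (complex order: 0 \<le> z iff z is real and nonnegative).\<close>
definition psd :: "complex^'n^'n \<Rightarrow> bool" where
  "psd A \<longleftrightarrow> (\<forall>x::complex^'n. 0 \<le> (\<Sum>i\<in>UNIV. cnj (x$i) * (A *v x)$i))"

definition resolv :: "complex^'n^'n \<Rightarrow> real \<Rightarrow> complex^'n^'n" where
  "resolv M s = matrix_inv (M + s *\<^sub>R mat 1)"

definition Tmap :: "complex^'n^'n \<Rightarrow> complex^'n^'n \<Rightarrow> complex^'n^'n" where
  "Tmap M D = integral {0<..} (\<lambda>s. resolv M s ** D ** resolv M s)"

definition Rmap :: "complex^'n^'n \<Rightarrow> complex^'n^'n \<Rightarrow> complex^'n^'n" where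
  "Rmap M D = 2 *\<^sub>R integral {0<..} (\<lambda>s. resolv M s ** D ** resolv M s ** D ** resolv M s)"

end

theory Submission
  imports Defs
begin

(* Let M be positive semidefinite, let A be Hermitian with ker M contained in ker A, and
   write R s = (M + sI)^-1.  We prove the identity
       Tr M R_M(A) = Tr A T_M(A),
   so the theorem (M = A + B, where ker (A + B) is contained in ker A) holds with equality.
   Since M R s = I - s R s and d/ds R s = -(R s)^2, the primitive
       h s = s Tr (A R s A R s)
   has derivative 2 Tr (M R s A R s A R s) - Tr (A R s A R s), which is exactly the
   difference of the integrands of Tr M R_M(A) and Tr A T_M(A).  Both integrands decay
   like (1+s)^-2: at infinity because norm (R s) = O(1/s), near 0 because a Hermitian M
   has a commuting Hermitian pseudo-inverse Q with M M Q = M, so that A = M Q A and the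
   factors R s M = I - s R s stay bounded.  Hence everything is integrable, h vanishes at
   0 and at infinity, and the fundamental theorem of calculus gives the identity. *)

section \<open>Adjoint and the sesquilinear form\<close>

definition cinner :: "complex^'n \<Rightarrow> complex^'n \<Rightarrow> complex" where
  "cinner x y = (\<Sum>i\<in>UNIV. cnj (x$i) * y$i)"

definition mat_adj :: "complex^'n^'n \<Rightarrow> complex^'n^'n" where
  "mat_adj X = (\<chi> i j. cnj (X$j$i))"

lemma cinner_add_left: "cinner (x + y) z = cinner x z + cinner y z"
  by (simp add: cinner_def distrib_right sum.distrib)

lemma cinner_add_right: "cinner z (x + y) = cinner z x + cinner z y"
  by (simp add: cinner_def distrib_left sum.distrib)

lemma cinner_smult_left: "cinner (c *s x) z = cnj c * cinner x z"
  by (simp add: cinner_def sum_distrib_left mult.assoc)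

lemma cinner_smult_right: "cinner z (c *s x) = c * cinner z x"
  by (simp add: cinner_def sum_distrib_left mult.left_commute)

lemma cinner_zero_right: "cinner x 0 = 0"
  by (simp add: cinner_def)

lemma cinner_adjoint: "cinner x (X *v y) = cinner (mat_adj X *v x) y"
proof -
  have "cinner x (X *v y) = (\<Sum>i\<in>UNIV. \<Sum>j\<in>UNIV. cnj (x$i) * (X$i$j * y$j))"
    by (simp add: cinner_def matrix_vector_mult_def sum_distrib_left)
  also have "\<dots> = (\<Sum>j\<in>UNIV. \<Sum>i\<in>UNIV. cnj (x$i) * (X$i$j * y$j))"
    by (rule sum.swap)
  also have "\<dots> = cinner (mat_adj X *v x) y"
    by (simp add: cinner_def matrix_vector_mult_def mat_adj_def sum_distrib_right
        sum_distrib_left mult_ac)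
  finally show ?thesis .
qed

lemma cinner_axis_left: "cinner (axis i c) z = cnj c * z$i"
proof -
  have "(\<lambda>k. cnj (axis i c $ k) * z$k) = (\<lambda>k. if k = i then cnj c * z$k else 0)"
    by (auto simp: axis_def)
  then show ?thesis by (simp only: cinner_def) simp
qed

lemma matrix_vector_axis: "(X *v axis j c) $ i = X$i$j * c"
  by (simp add: matrix_vector_mult_def axis_def if_distrib cong: if_cong)

lemma cinner_self: "cinner x x = of_real ((norm x)^2)"
proof -
  have "cinner x x = (\<Sum>i\<in>UNIV. of_real ((cmod (x$i))^2))"
    unfolding cinner_def
    by (intro sum.cong refl) (metis complex_norm_square mult.commute of_real_power)
  also have "\<dots> = of_real (\<Sum>i\<in>UNIV. (cmod (x$i))^2)"
    by simp
  also have "(\<Sum>i\<in>UNIV. (cmod (x$i))^2) = (norm x)^2"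
    by (simp add: norm_vec_def L2_set_def sum_nonneg)
  finally show ?thesis .
qed

lemma cinner_Cauchy_Schwarz: "cmod (cinner x y) \<le> norm x * norm y"
proof -
  have "cmod (cinner x y) \<le> (\<Sum>i\<in>UNIV. cmod (x$i) * cmod (y$i))"
    unfolding cinner_def by (rule order_trans[OF norm_sum]) (simp add: norm_mult)
  also have "\<dots> \<le> L2_set (\<lambda>i. cmod (x$i)) UNIV * L2_set (\<lambda>i. cmod (y$i)) UNIV"
    using L2_set_mult_ineq[of "\<lambda>i. cmod (x$i)" "\<lambda>i. cmod (y$i)" UNIV] by simp
  finally show ?thesis by (simp add: norm_vec_def)
qed

lemma matrix_vector_smult: "(X::complex^'n^'n) *v (c *s v) = c *s (X *v v)"
  by (simp add: vec_eq_iff matrix_vector_mult_def sum_distrib_left mult_ac)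

lemma cinner_quadratic_expand:
  "cinner (u + c *s v) ((X::complex^'n^'n) *v (u + c *s v))
     = cinner u (X *v u) + c * cinner u (X *v v) + cnj c * cinner v (X *v u)
       + cnj c * c * cinner v (X *v v)"
  by (simp add: matrix_vector_right_distrib matrix_vector_smult cinner_add_left
      cinner_add_right cinner_smult_left cinner_smult_right algebra_simps)

lemma mat_adj_mult: "mat_adj (X ** Y) = mat_adj Y ** mat_adj X"
  by (simp add: mat_adj_def matrix_matrix_mult_def vec_eq_iff mult.commute)

lemma mat_adj_add: "mat_adj (X + Y) = mat_adj X + mat_adj Y"
  by (simp add: mat_adj_def vec_eq_iff)

lemma mat_adj_scaleR: "mat_adj (c *\<^sub>R X) = c *\<^sub>R mat_adj X"
  by (simp add: mat_adj_def vec_eq_iff)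

lemma mat_adj_one: "mat_adj (mat 1) = mat 1"
  by (simp add: mat_adj_def vec_eq_iff mat_def)

lemma mat_adj_sum: "mat_adj (sum f S) = (\<Sum>i\<in>S. mat_adj (f i))"
proof (induct S rule: infinite_finite_induct)
  case (infinite S)
  then show ?case by (simp add: mat_adj_def vec_eq_iff)
qed (simp_all add: mat_adj_add mat_adj_def vec_eq_iff)

section \<open>Positive semidefinite matrices\<close>

lemma psd_cinner: "psd A \<longleftrightarrow> (\<forall>x. 0 \<le> cinner x (A *v x))"
  by (simp add: psd_def cinner_def)

lemma complex_nonneg_Im: "0 \<le> (z::complex) \<Longrightarrow> Im z = 0"
  by (simp add: less_eq_complex_def)

text \<open>A complex positive semidefinite matrix is Hermitian (its quadratic form is real).\<close>
lemma psd_hermitian: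
  assumes "psd A" shows "mat_adj A = A"
proof -
  have real_form: "\<And>x. Im (cinner x (A *v x)) = 0"
    using assms complex_nonneg_Im by (auto simp: psd_cinner)
  have "cnj (A$j$i) = A$i$j" for i j
  proof -
    let ?u = "axis i (1::complex)" and ?v = "axis j (1::complex)"
    have e1: "cinner ?u (A *v ?v) = A$i$j" and e2: "cinner ?v (A *v ?u) = A$j$i"
      by (simp_all add: cinner_axis_left matrix_vector_axis)
    have "Im (A$i$j) + Im (A$j$i) = 0"
      using real_form[of "?u + 1 *s ?v"]
      unfolding cinner_quadratic_expand e1 e2 using real_form[of ?u] real_form[of ?v] by simp
    moreover have "Re (A$i$j) - Re (A$j$i) = 0"
      using real_form[of "?u + \<i> *s ?v"]
      unfolding cinner_quadratic_expand e1 e2 using real_form[of ?u] real_form[of ?v] by simp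
    ultimately show ?thesis by (simp add: complex_eq_iff)
  qed
  then show ?thesis by (simp add: mat_adj_def vec_eq_iff)
qed

lemma psd_form_zero_kernel:
  assumes "psd A" and "cinner x (A *v x) = 0" shows "A *v x = 0"
proof -
  have form: "\<And>x. 0 \<le> cinner x (A *v x)" using assms psd_cinner by blast
  define y where "y = A *v x"
  define a where "a = (norm y)^2"
  define b where "b = Re (cinner y (A *v y))"
  have b0: "0 \<le> b" using form[of y] by (simp add: b_def less_eq_complex_def)
  have bIm: "Im (cinner y (A *v y)) = 0" using form[of y] complex_nonneg_Im by blast
  have c1: "cinner x (A *v y) = of_real a"
    by (simp add: cinner_adjoint psd_hermitian[OF assms(1)] y_def[symmetric] cinner_self a_def)
  have c2: "cinner y (A *v x) = of_real a"
    by (simp add: y_def[symmetric] cinner_self a_def)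
  have quadratic: "0 \<le> 2*t*a + t^2*b" for t :: real
  proof -
    have "0 \<le> Re (cinner (x + of_real t *s y) (A *v (x + of_real t *s y)))"
      using form by (simp add: less_eq_complex_def)
    also have "\<dots> = 2*t*a + t^2*b"
      unfolding cinner_quadratic_expand c1 c2 using assms(2) bIm
      by (simp add: b_def power2_eq_square)
    finally show ?thesis .
  qed
  have "0 \<le> 2*(-a/(b+1))*a + (-a/(b+1))^2*b" by (rule quadratic)
  also have "\<dots> = - a*a*(b+2) / (b+1)^2"
    using b0 by (simp add: divide_simps power2_eq_square) (simp add: algebra_simps)
  finally have "a*a*(b+2) / (b+1)^2 \<le> 0" by simp
  moreover have "0 < (b+1)^2" using b0 by simp
  ultimately have "a*a*(b+2) \<le> 0" by (simp add: divide_le_0_iff)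
  then have "a = 0" using b0 by (simp add: mult_le_0_iff) arith
  then show ?thesis by (simp add: a_def y_def)
qed

lemma psd_add: "psd A \<Longrightarrow> psd B \<Longrightarrow> psd (A + B)"
  by (simp add: psd_cinner matrix_vector_mult_add_rdistrib cinner_add_right add_nonneg_nonneg)

lemma psd_sum_kernel:
  assumes "psd A" "psd B" "(A + B) *v x = 0" shows "A *v x = 0"
proof -
  have "cinner x (A *v x) + cinner x (B *v x) = 0"
    using assms(3) by (simp add: matrix_vector_mult_add_rdistrib cinner_add_right [symmetric]
        cinner_zero_right)
  moreover have "0 \<le> cinner x (A *v x)" "0 \<le> cinner x (B *v x)"
    using assms psd_cinner by blast+
  ultimately have "cinner x (A *v x) = 0" by (simp add: add_nonneg_eq_0_iff)
  then show ?thesis using psd_form_zero_kernel assms(1) by blast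
qed

section \<open>Matrix algebra and norms\<close>

lemma matrix_scaleR_left: "(c *\<^sub>R X) ** (Y::complex^'n^'n) = c *\<^sub>R (X ** Y)"
  by (simp add: scalar_matrix_assoc)

lemma matrix_scaleR_right: "(X::complex^'n^'n) ** (c *\<^sub>R Y) = c *\<^sub>R (X ** Y)"
  by (simp add: matrix_matrix_mult_def sum_distrib_left mult_ac vec_eq_iff scaleR_sum_right)

lemma matrix_add_rdistrib: "(X + Y) ** (Z::complex^'n^'n) = X ** Z + Y ** Z"
  by (simp add: matrix_matrix_mult_def vec_eq_iff sum.distrib distrib_right)

lemma matrix_diff_rdistrib: "(X - Y) ** (Z::complex^'n^'n) = X ** Z - Y ** Z"
  by (simp add: matrix_matrix_mult_def vec_eq_iff sum_subtractf left_diff_distrib)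

lemma matrix_diff_ldistrib: "Z ** (X - Y) = Z ** X - Z ** (Y::complex^'n^'n)"
  by (simp add: matrix_matrix_mult_def vec_eq_iff sum_subtractf right_diff_distrib)

lemma matrix_uminus_left: "(- X) ** (Z::complex^'n^'n) = - (X ** Z)"
  by (simp add: matrix_matrix_mult_def vec_eq_iff sum_negf)

lemma matrix_uminus_right: "Z ** (- X) = - (Z ** (X::complex^'n^'n))"
  by (simp add: matrix_matrix_mult_def vec_eq_iff sum_negf)

lemma matrix_sum_right: "(X::complex^'n^'n) ** sum f S = (\<Sum>i\<in>S. X ** f i)"
  by (induct S rule: infinite_finite_induct) (simp_all add: matrix_add_ldistrib)

lemma matrix_sum_left: "sum f S ** (X::complex^'n^'n) = (\<Sum>i\<in>S. f i ** X)"
  by (induct S rule: infinite_finite_induct) (simp_all add: matrix_add_rdistrib)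

lemmas matrix_ring_simps = matrix_scaleR_left matrix_scaleR_right matrix_add_rdistrib
  matrix_add_ldistrib matrix_diff_rdistrib matrix_diff_ldistrib matrix_uminus_left
  matrix_uminus_right

lemma trace_scaleR: "trace (c *\<^sub>R (X::complex^'n^'n)) = c *\<^sub>R trace X"
  by (simp add: trace_def scaleR_sum_right)

lemma trace_uminus: "trace (- (X::complex^'n^'n)) = - trace X"
  by (simp add: trace_def sum_negf)

text \<open>Matrix multiplication is a bounded bilinear map and the trace a bounded linear one
  (every (bi)linear map between finite-dimensional spaces is bounded).\<close>
lemma bounded_bilinear_matrix_mult:
  "bounded_bilinear ((**) :: complex^'n^'n \<Rightarrow> complex^'n^'n \<Rightarrow> complex^'n^'n)"
  unfolding bilinear_conv_bounded_bilinear[symmetric] bilinear_def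
  by (auto intro!: linearI simp: matrix_ring_simps)

lemma bounded_linear_trace: "bounded_linear (trace :: complex^'n^'n \<Rightarrow> complex)"
  unfolding linear_conv_bounded_linear[symmetric]
  by (rule linearI) (simp_all add: trace_add trace_scaleR)

lemma bounded_linear_trace_mult: "bounded_linear (\<lambda>X. trace ((C::complex^'n^'n) ** X))"
  by (rule bounded_linear_compose[OF bounded_linear_trace
        bounded_bilinear.bounded_linear_right[OF bounded_bilinear_matrix_mult]])

lemma matrix_mult_norm_bound:
  "\<exists>K\<ge>0. \<forall>(X::complex^'n^'n) (Y::complex^'n^'n) a b. norm X \<le> a \<longrightarrow> norm Y \<le> b \<longrightarrow> norm (X ** Y) \<le> a * b * K"
proof -
  obtain K where K: "0 \<le> K" "\<And>(X::complex^'n^'n) (Y::complex^'n^'n). norm (X ** Y) \<le> norm X * norm Y * K"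
    using bounded_bilinear.nonneg_bounded[OF bounded_bilinear_matrix_mult] by blast
  have bound: "norm (X ** Y) \<le> a * b * K" if "norm X \<le> a" "norm Y \<le> b"
    for X Y :: "complex^'n^'n" and a b
  proof -
    have "norm X * norm Y \<le> a * b"
      using that by (intro mult_mono) (auto intro: order_trans[OF norm_ge_zero])
    then show ?thesis using K by (meson mult_right_mono order_trans)
  qed
  show ?thesis
  proof (intro exI[of _ K] conjI allI impI)
    show "0 \<le> K" by (rule K(1))
    fix X Y :: "complex^'n^'n" and a b assume "norm X \<le> a" "norm Y \<le> b"
    then show "norm (X ** Y) \<le> a * b * K" by (rule bound)
  qed
qed

lemma norm_matrix_entry_bound:
  assumes "\<And>i j. cmod (X$i$j) \<le> c"
  shows "norm (X::complex^'n^'n) \<le> real CARD('n) * real CARD('n) * c"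
proof -
  have "norm X \<le> (\<Sum>i\<in>UNIV. norm (X$i))"
    unfolding norm_vec_def by (rule L2_set_le_sum) simp
  also have "\<dots> \<le> (\<Sum>i\<in>(UNIV::'n set). \<Sum>j\<in>(UNIV::'n set). c)"
  proof (intro sum_mono)
    fix i
    have "norm (X$i) \<le> (\<Sum>j\<in>UNIV. cmod (X$i$j))"
      unfolding norm_vec_def by (rule L2_set_le_sum) simp
    also have "\<dots> \<le> (\<Sum>j\<in>(UNIV::'n set). c)" by (intro sum_mono assms)
    finally show "norm (X$i) \<le> (\<Sum>j\<in>(UNIV::'n set). c)" .
  qed
  finally show ?thesis by simp
qed

section \<open>The resolvent\<close>

lemma scaleR_one_matrix_vector: "((s *\<^sub>R mat 1) :: complex^'n^'n) *v x = of_real s *s x"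
proof -
  have "((s *\<^sub>R mat 1) :: complex^'n^'n) = mat (of_real s)"
    by (simp add: vec_eq_iff mat_def of_real_def)
  then show ?thesis
    by (simp add: vec_eq_iff matrix_vector_mult_def mat_def if_distrib if_distribR cong: if_cong)
qed

lemma shifted_lower_bound:
  fixes M :: "complex^'n^'n" assumes "psd M" "0 < s"
  shows "s * norm x \<le> norm ((M + s *\<^sub>R mat 1) *v x)"
proof -
  let ?y = "(M + s *\<^sub>R mat 1) *v x"
  have e: "cinner x ?y = cinner x (M *v x) + of_real s * of_real ((norm x)^2)"
    by (simp add: matrix_vector_mult_add_rdistrib cinner_add_right scaleR_one_matrix_vector
        cinner_smult_right cinner_self)
  have "0 \<le> Re (cinner x (M *v x))"
    using assms(1) psd_cinner by (auto simp: less_eq_complex_def)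
  then have "s * (norm x)^2 \<le> Re (cinner x ?y)" using e by simp
  also have "\<dots> \<le> cmod (cinner x ?y)" by (rule complex_Re_le_cmod)
  also have "\<dots> \<le> norm x * norm ?y" by (rule cinner_Cauchy_Schwarz)
  finally have "s * (norm x)^2 \<le> norm x * norm ?y" .
  then show ?thesis
    by (cases "norm x = 0") (simp_all add: power2_eq_square mult_ac)
qed

lemma resolv_inverse:
  fixes M :: "complex^'n^'n" assumes "psd M" "0 < s"
  shows "(M + s *\<^sub>R mat 1) ** resolv M s = mat 1" "resolv M s ** (M + s *\<^sub>R mat 1) = mat 1"
proof -
  have "\<forall>x. (M + s *\<^sub>R mat 1) *v x = 0 \<longrightarrow> x = 0"
    using shifted_lower_bound[OF assms] assms(2)
    by (metis mult_le_0_iff norm_eq_zero norm_ge_zero norm_zero order.strict_iff_not order_antisym)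
  then have "invertible (M + s *\<^sub>R mat 1)"
    using matrix_left_invertible_ker invertible_left_inverse by blast
  then have "\<exists>X. (M + s *\<^sub>R mat 1) ** X = mat 1 \<and> X ** (M + s *\<^sub>R mat 1) = mat 1"
    using invertible_def by blast
  then have "(M + s *\<^sub>R mat 1) ** resolv M s = mat 1 \<and> resolv M s ** (M + s *\<^sub>R mat 1) = mat 1"
    unfolding resolv_def matrix_inv_def by (rule someI_ex)
  then show "(M + s *\<^sub>R mat 1) ** resolv M s = mat 1" "resolv M s ** (M + s *\<^sub>R mat 1) = mat 1"
    by auto
qed

lemma resolv_absorb:
  fixes M :: "complex^'n^'n" assumes "psd M" "0 < s"
  shows "M ** resolv M s = mat 1 - s *\<^sub>R resolv M s"
    and "resolv M s ** M = mat 1 - s *\<^sub>R resolv M s"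
  using resolv_inverse[OF assms] by (simp_all add: matrix_ring_simps algebra_simps)

lemma resolvent_identity:
  fixes M :: "complex^'n^'n" assumes "psd M" "0 < s" "0 < t"
  shows "resolv M t - resolv M s = (s - t) *\<^sub>R (resolv M t ** resolv M s)"
proof -
  let ?Rs = "resolv M s" and ?Rt = "resolv M t"
  have "?Rt - ?Rs = ?Rt ** ((M + s *\<^sub>R mat 1) ** ?Rs) - (?Rt ** (M + t *\<^sub>R mat 1)) ** ?Rs"
    by (simp add: resolv_inverse[OF assms(1,2)] resolv_inverse[OF assms(1,3)])
  also have "\<dots> = ?Rt ** ((M + s *\<^sub>R mat 1) - (M + t *\<^sub>R mat 1)) ** ?Rs"
    by (simp add: matrix_ring_simps matrix_mul_assoc)
  also have "(M + s *\<^sub>R mat 1) - (M + t *\<^sub>R mat 1) = (s - t) *\<^sub>R (mat 1 :: complex^'n^'n)"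
    by (simp add: algebra_simps)
  finally show ?thesis by (simp add: matrix_ring_simps)
qed

lemma resolv_norm_bound:
  fixes M :: "complex^'n^'n" assumes "psd M" "0 < s"
  shows "norm (resolv M s) \<le> real CARD('n) * real CARD('n) / s"
proof -
  have vector_bound: "norm (resolv M s *v y) \<le> norm y / s" for y
  proof -
    have "(M + s *\<^sub>R mat 1) *v (resolv M s *v y) = y"
      by (simp add: matrix_vector_mul_assoc resolv_inverse[OF assms])
    then have "s * norm (resolv M s *v y) \<le> norm y" using shifted_lower_bound[OF assms] by metis
    then show ?thesis using assms(2) by (simp add: field_simps)
  qed
  have "cmod (resolv M s $ i $ j) \<le> 1 / s" for i j
  proof -
    have "cmod (resolv M s $ i $ j) \<le> norm (resolv M s *v axis j 1)"
      by (metis Finite_Cartesian_Product.norm_nth_le matrix_vector_axis mult_1_right)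
    also have "\<dots> \<le> norm (axis j (1::complex)) / s" by (rule vector_bound)
    finally show ?thesis by simp
  qed
  then show ?thesis using norm_matrix_entry_bound[of "resolv M s" "1/s"] by simp
qed

text \<open>Points near s > 0 stay above s/2, where the resolvent bound is uniform.\<close>
lemma eventually_above_half: "0 < (s::real) \<Longrightarrow> \<forall>\<^sub>F t in at s. s/2 < t"
  using order_tendstoD(1)[OF tendsto_ident_at, of "s/2" s UNIV] by simp

text \<open>Continuity of the resolvent, from the resolvent identity and the O(1/s) bound.\<close>
lemma resolv_continuous:
  fixes M :: "complex^'n^'n" assumes "psd M" "0 < s"
  shows "((\<lambda>t. resolv M t) \<longlongrightarrow> resolv M s) (at s)"
proof -
  obtain K where K: "\<And>(X::complex^'n^'n) (Y::complex^'n^'n) a b. norm X \<le> a \<Longrightarrow> norm Y \<le> b \<Longrightarrow> norm (X ** Y) \<le> a * b * K"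
    using matrix_mult_norm_bound by blast
  define c where "c = real CARD('n) * real CARD('n)"
  have "((\<lambda>t. resolv M t - resolv M s) \<longlongrightarrow> 0) (at s)"
  proof (rule Lim_null_comparison)
    show "\<forall>\<^sub>F t in at s. norm (resolv M t - resolv M s) \<le> \<bar>s - t\<bar> * ((c / (s/2)) * (c / s) * K)"
      using eventually_above_half[OF assms(2)]
    proof eventually_elim
      case (elim t)
      then have t0: "0 < t" using assms(2) by simp
      have "norm (resolv M t) \<le> c / t" using resolv_norm_bound[OF assms(1) t0] by (simp add: c_def)
      also have "\<dots> \<le> c / (s/2)" using elim assms(2) by (intro divide_left_mono) (auto simp: c_def)
      finally have Rt: "norm (resolv M t) \<le> c / (s/2)" .
      have Rs: "norm (resolv M s) \<le> c / s" using resolv_norm_bound[OF assms] by (simp add: c_def)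
      have "norm (resolv M t ** resolv M s) \<le> (c / (s/2)) * (c / s) * K" by (rule K[OF Rt Rs])
      moreover have "norm (resolv M t - resolv M s) = \<bar>s - t\<bar> * norm (resolv M t ** resolv M s)"
        by (simp add: resolvent_identity[OF assms t0])
      ultimately show ?case by (metis abs_ge_zero mult_left_mono)
    qed
    show "((\<lambda>t. \<bar>s - t\<bar> * ((c / (s/2)) * (c / s) * K)) \<longlongrightarrow> 0) (at s)"
      by (rule tendsto_eq_intros refl | simp)+
  qed
  then show ?thesis by (simp add: LIM_zero_iff)
qed

lemma resolv_derivative:
  fixes M :: "complex^'n^'n" assumes "psd M" "0 < s"
  shows "((\<lambda>t. resolv M t) has_vector_derivative (- (resolv M s ** resolv M s))) (at s)"
  unfolding has_vector_derivative_def has_derivative_iff_norm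
proof (intro conjI)
  show "bounded_linear (\<lambda>h. h *\<^sub>R - (resolv M s ** resolv M s))"
    by (rule bounded_linear_scaleR_left)
  let ?R = "\<lambda>t. resolv M t"
  have "((\<lambda>t. (?R t - ?R s) ** ?R s) \<longlongrightarrow> (?R s - ?R s) ** ?R s) (at s)"
    by (intro bounded_bilinear.tendsto[OF bounded_bilinear_matrix_mult] tendsto_diff
        resolv_continuous[OF assms] tendsto_const)
  then have lim: "((\<lambda>t. norm ((?R t - ?R s) ** ?R s)) \<longlongrightarrow> 0) (at s)"
    using tendsto_norm by fastforce
  show "((\<lambda>t. norm (?R t - ?R s - (t - s) *\<^sub>R - (?R s ** ?R s)) / norm (t - s)) \<longlongrightarrow> 0) (at s)"
  proof (rule Lim_transform_eventually[OF lim])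
    show "\<forall>\<^sub>F t in at s. norm ((?R t - ?R s) ** ?R s)
        = norm (?R t - ?R s - (t - s) *\<^sub>R - (?R s ** ?R s)) / norm (t - s)"
      using eventually_conj[OF eventually_above_half[OF assms(2)] eventually_neq_at_within[where x=s]]
    proof eventually_elim
      case (elim t)
      then have t0: "0 < t" using assms(2) by simp
      have "?R t - ?R s - (t - s) *\<^sub>R - (?R s ** ?R s)
          = (s - t) *\<^sub>R (?R t ** ?R s) - (s - t) *\<^sub>R (?R s ** ?R s)"
        by (subst resolvent_identity[OF assms t0]) (simp add: algebra_simps)
      also have "\<dots> = (s - t) *\<^sub>R ((?R t - ?R s) ** ?R s)"
        by (simp add: matrix_diff_rdistrib scaleR_diff_right)
      finally have "?R t - ?R s - (t - s) *\<^sub>R - (?R s ** ?R s) = (s - t) *\<^sub>R ((?R t - ?R s) ** ?R s)" .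
      then show ?case using elim by (simp add: abs_minus_commute[of s t])
    qed
  qed
qed

section \<open>A commuting pseudo-inverse of a Hermitian matrix\<close>

fun mpow :: "complex^'n^'n \<Rightarrow> nat \<Rightarrow> complex^'n^'n" where
  "mpow X 0 = mat 1"
| "mpow X (Suc k) = X ** mpow X k"

lemma mpow_commute: "M ** mpow M k = mpow M k ** M"
proof (induct k)
  case (Suc k)
  have "(M ** mpow M k) ** M = M ** (mpow M k ** M)" by (simp add: matrix_mul_assoc)
  then show ?case by (simp add: Suc)
qed simp

lemma poly_commute: "M ** (\<Sum>k\<le>K. d k *\<^sub>R mpow M k) = (\<Sum>k\<le>K. d k *\<^sub>R mpow M k) ** M"
  by (simp add: matrix_sum_right matrix_sum_left matrix_ring_simps mpow_commute)

lemma poly_hermitian: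
  assumes "mat_adj M = M" shows "mat_adj (\<Sum>k\<le>K. d k *\<^sub>R mpow M k) = (\<Sum>k\<le>K. d k *\<^sub>R mpow M k)"
proof -
  have "mat_adj (mpow M k) = mpow M k" for k
    by (induct k) (simp_all add: mat_adj_one mat_adj_mult mpow_commute assms)
  then show ?thesis by (simp add: mat_adj_sum mat_adj_scaleR)
qed

lemma hermitian_square_annihilates:
  assumes "mat_adj M = M" "M ** (M ** Z) = 0" shows "M ** Z = 0"
proof -
  have "(M ** Z) *v x = 0" for x
  proof -
    let ?z = "Z *v x"
    have "M *v (M *v ?z) = 0" using assms(2)
      by (metis matrix_vector_mul_assoc matrix_vector_mult_0 times0_left matrix_eq)
    then have "cinner (M *v ?z) (M *v ?z) = 0"
      using cinner_adjoint[of ?z M "M *v ?z"] assms(1) by (simp add: cinner_def)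
    then show ?thesis by (simp add: cinner_self matrix_vector_mul_assoc)
  qed
  then show ?thesis using matrix_eq by (metis matrix_vector_mult_0 times0_left)
qed

text \<open>Some nontrivial real polynomial annihilates M (the powers are linearly dependent).\<close>
lemma annihilating_polynomial:
  fixes M :: "complex^'n^'n"
  shows "\<exists>(c::nat \<Rightarrow> real) N. (\<exists>k\<le>N. c k \<noteq> 0) \<and> (\<Sum>k\<le>N. c k *\<^sub>R mpow M k) = 0"
proof (cases "inj_on (mpow M) {..DIM(complex^'n^'n)}")
  case True
  define S where "S = mpow M ` {..DIM(complex^'n^'n)}"
  have "card S = DIM(complex^'n^'n) + 1" unfolding S_def using card_image[OF True] by simp
  then have "\<not> independent S"
    using independent_bound by fastforce
  then obtain u where u: "\<exists>v\<in>S. u v \<noteq> 0" "(\<Sum>v\<in>S. u v *\<^sub>R v) = 0"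
    using real_vector.dependent_finite[of S] unfolding S_def by blast
  have "(\<Sum>v\<in>S. u v *\<^sub>R v) = (\<Sum>k\<le>DIM(complex^'n^'n). u (mpow M k) *\<^sub>R mpow M k)"
    unfolding S_def by (subst sum.reindex[OF True]) (simp add: comp_def)
  then show ?thesis using u unfolding S_def
    by (intro exI[of _ "\<lambda>k. u (mpow M k)"] exI[of _ "DIM(complex^'n^'n)"]) auto
next
  case False
  then obtain i j where ij: "i \<noteq> j" "mpow M i = mpow M j"
    unfolding inj_on_def by blast
  define c :: "nat \<Rightarrow> real" where "c = (\<lambda>k. if k = i then 1 else if k = j then -1 else 0)"
  have "(\<Sum>k\<le>max i j. c k *\<^sub>R mpow M k) = (\<Sum>k\<in>{i,j}. c k *\<^sub>R mpow M k)"
    by (rule sum.mono_neutral_right) (auto simp: c_def)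
  also have "\<dots> = 0" using ij by (simp add: c_def)
  finally show ?thesis using ij(1) by (intro exI[of _ c] exI[of _ "max i j"]) (auto simp: c_def)
qed

text \<open>If M times a nontrivial polynomial in M vanishes, then M^2 Q = M for a polynomial Q in M:
  strip the lowest coefficient, using ker M^2 = ker M when it is zero.\<close>
lemma pseudo_inverse_from_annihilator:
  assumes "mat_adj M = M"
  shows "(\<exists>k\<le>N. c k \<noteq> 0) \<Longrightarrow> M ** (\<Sum>k\<le>N. c k *\<^sub>R mpow M k) = 0 \<Longrightarrow>
     \<exists>d K. M ** M ** (\<Sum>k\<le>K. d k *\<^sub>R mpow M k) = M"
proof (induct N arbitrary: c)
  case 0
  then have "M = 0" by (auto simp: matrix_ring_simps)
  then show ?case by (intro exI[of _ "\<lambda>k. 0"]) simp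
next
  case (Suc N)
  define T where "T = (\<Sum>k\<le>N. c (Suc k) *\<^sub>R mpow M k)"
  have split: "(\<Sum>k\<le>Suc N. c k *\<^sub>R mpow M k) = c 0 *\<^sub>R mat 1 + M ** T"
    unfolding sum.atMost_Suc_shift by (simp add: T_def matrix_sum_right matrix_ring_simps)
  show ?case
  proof (cases "c 0 = 0")
    case True
    then have "M ** (M ** T) = 0" using Suc.prems(2) unfolding split by simp
    then have "M ** T = 0" by (rule hermitian_square_annihilates[OF assms])
    moreover have "\<exists>k\<le>N. c (Suc k) \<noteq> 0" using Suc.prems(1) True
      by (metis Suc_le_mono not0_implies_Suc)
    ultimately show ?thesis using Suc.hyps[of "\<lambda>k. c (Suc k)"] by (simp add: T_def)
  next
    case False
    have "c 0 *\<^sub>R M + M ** M ** T = 0"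
      using Suc.prems(2) unfolding split by (simp add: matrix_ring_simps matrix_mul_assoc)
    then have "M ** M ** T = - (c 0 *\<^sub>R M)"
      by (simp add: eq_neg_iff_add_eq_0 add.commute)
    then have "M ** M ** ((- 1 / c 0) *\<^sub>R T) = M"
      using False by (simp add: matrix_ring_simps)
    moreover have "(- 1 / c 0) *\<^sub>R T = (\<Sum>k\<le>N. (- 1 / c 0 * c (Suc k)) *\<^sub>R mpow M k)"
      by (simp add: T_def scaleR_sum_right)
    ultimately show ?thesis by metis
  qed
qed

lemma hermitian_pseudo_inverse:
  assumes "mat_adj M = M"
  shows "\<exists>Q. M ** M ** Q = M \<and> M ** Q = Q ** M \<and> mat_adj Q = Q"
proof -
  obtain c N where c: "\<exists>k\<le>N. c k \<noteq> 0" "(\<Sum>k\<le>N. c k *\<^sub>R mpow M k) = 0"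
    using annihilating_polynomial by blast
  then obtain d K where "M ** M ** (\<Sum>k\<le>K. d k *\<^sub>R mpow M k) = M"
    using pseudo_inverse_from_annihilator[OF assms, of N c] by (auto simp: matrix_sum_right)
  then show ?thesis using poly_commute poly_hermitian[OF assms] by blast
qed

section \<open>Quadratically decaying functions on (0, \<infinity>)\<close>

text \<open>f is O((1+s)^-2) on (0, \<infinity>); this gives integrability and controls s f(s).\<close>
definition quadratic_decay :: "(real \<Rightarrow> 'a::real_normed_vector) \<Rightarrow> bool" where
  "quadratic_decay f \<longleftrightarrow> (\<exists>K. \<forall>s>0. norm (f s) \<le> K / (1 + s)^2)"

lemma quadratic_decayI:
  assumes small: "\<And>s. 0 < s \<Longrightarrow> s \<le> 1 \<Longrightarrow> norm (f s) \<le> C1"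
    and large: "\<And>s. 1 \<le> s \<Longrightarrow> norm (f s) \<le> C2 / s^2"
  shows "quadratic_decay f"
  unfolding quadratic_decay_def
proof (intro exI allI impI)
  fix s :: real assume s: "0 < s"
  define m1 where "m1 = max C1 0"
  define m2 where "m2 = max C2 0"
  have m: "0 \<le> m1" "0 \<le> m2" "C1 \<le> m1" "C2 \<le> m2" by (simp_all add: m1_def m2_def)
  define K where "K = 4 * m1 + 4 * m2"
  show "norm (f s) \<le> K / (1 + s)^2"
  proof (cases "s \<le> 1")
    case True
    have "(1 + s)^2 \<le> 2^2" using True s by (intro power_mono) auto
    then have "m1 * (1 + s)^2 \<le> m1 * 2^2" using m by (intro mult_left_mono) auto
    then have "m1 \<le> K / (1 + s)^2" using s m by (simp add: K_def field_simps)
    then show ?thesis using small[OF s True] m by linarith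
  next
    case False
    have "(1 + s)^2 \<le> (2 * s)^2" using False by (intro power_mono) auto
    then have "m2 * (1 + s)^2 \<le> m2 * (4 * s^2)"
      using m by (intro mult_left_mono) (auto simp: power_mult_distrib)
    moreover have "K * s^2 = m1 * (4 * s^2) + m2 * (4 * s^2)" by (simp add: K_def algebra_simps)
    moreover have "0 \<le> m1 * (4 * s^2)" using m by simp
    ultimately have "m2 * (1 + s)^2 \<le> K * s^2" by linarith
    then have "m2 / s^2 \<le> K / (1 + s)^2" using s by (simp add: field_simps)
    moreover have "norm (f s) \<le> m2 / s^2"
      using order_trans[OF large divide_right_mono[OF m(4)]] False by simp
    ultimately show ?thesis by linarith
  qed
qed

lemma quadratic_decay_bounded_linear:
  assumes "bounded_linear T" "quadratic_decay f"
  shows "quadratic_decay (\<lambda>s. T (f s))"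
proof -
  obtain L where L: "\<And>x. norm (T x) \<le> norm x * L" "0 \<le> L"
    using bounded_linear.nonneg_bounded[OF assms(1)] by blast
  obtain K where K: "\<And>s. 0 < s \<Longrightarrow> norm (f s) \<le> K / (1 + s)^2"
    using assms(2) unfolding quadratic_decay_def by blast
  have "norm (T (f s)) \<le> K * L / (1 + s)^2" if "0 < s" for s
  proof -
    have "norm (T (f s)) \<le> norm (f s) * L" by (rule L(1))
    also have "\<dots> \<le> K / (1 + s)^2 * L" by (rule mult_right_mono[OF K[OF that] L(2)])
    finally show ?thesis by simp
  qed
  then show ?thesis unfolding quadratic_decay_def by blast
qed

lemma quadratic_decay_diff:
  assumes "quadratic_decay f" "quadratic_decay g"
  shows "quadratic_decay (\<lambda>s. f s - g s)"
proof -
  obtain K L where K: "\<And>s. 0 < s \<Longrightarrow> norm (f s) \<le> K / (1 + s)^2"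
    and L: "\<And>s. 0 < s \<Longrightarrow> norm (g s) \<le> L / (1 + s)^2"
    using assms unfolding quadratic_decay_def by blast
  have "norm (f s - g s) \<le> (K + L) / (1 + s)^2" if "0 < s" for s
    using norm_triangle_ineq4[of "f s" "g s"] K[OF that] L[OF that] by (simp add: add_divide_distrib)
  then show ?thesis unfolding quadratic_decay_def by blast
qed

lemma quadratic_decay_bilinear:
  fixes f :: "real \<Rightarrow> 'a::real_normed_vector" and g :: "real \<Rightarrow> 'b::real_normed_vector"
    and prod :: "'a \<Rightarrow> 'b \<Rightarrow> 'c::real_normed_vector"
  assumes "bounded_bilinear prod" "quadratic_decay f" and bnd: "\<And>s. 0 < s \<Longrightarrow> norm (g s) \<le> B"
  shows "quadratic_decay (\<lambda>s. prod (f s) (g s))"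
proof -
  obtain P where P: "\<And>x y. norm (prod x y) \<le> norm x * norm y * P" "0 \<le> P"
    using bounded_bilinear.nonneg_bounded[OF assms(1)] by blast
  obtain K where K: "\<And>s. 0 < s \<Longrightarrow> norm (f s) \<le> K / (1 + s)^2"
    using assms(2) unfolding quadratic_decay_def by blast
  have B: "0 \<le> B" using bnd[of 1] norm_ge_zero[of "g 1"] by linarith
  have "norm (prod (f s) (g s)) \<le> K * B * P / (1 + s)^2" if "0 < s" for s
  proof -
    have "norm (prod (f s) (g s)) \<le> norm (f s) * norm (g s) * P" by (rule P(1))
    also have "\<dots> \<le> K / (1 + s)^2 * B * P"
    proof -
      have "0 \<le> K / (1 + s)^2" using K[OF that] norm_ge_zero[of "f s"] by linarith
      then show ?thesis using K[OF that] bnd[OF that] P(2) by (intro mult_right_mono mult_mono) auto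
    qed
    finally show ?thesis by simp
  qed
  then show ?thesis unfolding quadratic_decay_def by blast
qed

lemma integrable_inverse_square: "set_integrable lborel {0<..} (\<lambda>s::real. 1 / (1 + s)^2)"
proof -
  have "set_integrable lborel (einterval 0 \<infinity>) (\<lambda>s::real. 1 / (1 + s)^2)"
  proof (rule interval_integral_FTC_nonneg(1)[where F="\<lambda>x. - 1 / (1 + x)" and A="-1" and B=0])
    show "DERIV (\<lambda>x. - 1 / (1 + x)) x :> 1 / (1 + x)^2" if "0 < ereal x" for x
      using that by (auto intro!: derivative_eq_intros simp: power2_eq_square field_simps)
    show "isCont (\<lambda>x::real. 1 / (1 + x)^2) x" if "0 < ereal x" for x
      using that by (intro continuous_intros) auto
    have "((\<lambda>x::real. - 1 / (1 + x)) \<longlongrightarrow> - 1) (at_right 0)"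
      by (rule tendsto_eq_intros refl | simp)+
    then show "(((\<lambda>x. - 1 / (1 + x)) \<circ> real_of_ereal) \<longlongrightarrow> - 1) (at_right 0)"
      unfolding zero_ereal_def ereal_tendsto_simps .
    show "(((\<lambda>x. - 1 / (1 + x)) \<circ> real_of_ereal) \<longlongrightarrow> 0) (at_left \<infinity>)"
      unfolding ereal_tendsto_simps by real_asymp
  qed auto
  then show ?thesis by (simp add: zero_ereal_def)
qed

lemma quadratic_decay_integrable:
  fixes f :: "real \<Rightarrow> 'a::euclidean_space"
  assumes cont: "\<And>s. 0 < s \<Longrightarrow> isCont f s" and "quadratic_decay f"
  shows "set_integrable lborel {0<..} f"
proof -
  obtain K where K: "\<And>s. 0 < s \<Longrightarrow> norm (f s) \<le> K / (1 + s)^2"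
    using assms(2) unfolding quadratic_decay_def by blast
  show ?thesis
  proof (rule set_integrable_bound)
    show "set_integrable lborel {0<..} (\<lambda>s::real. K * (1 / (1 + s)^2))"
      using integrable_inverse_square by (rule set_integrable_mult_right)
    show "set_borel_measurable lborel {0<..} f"
      unfolding set_borel_measurable_def measurable_lborel2
      by (rule borel_measurable_continuous_on_indicator)
        (auto intro: continuous_at_imp_continuous_on cont)
    show "AE x in lborel. x \<in> {0<..} \<longrightarrow> norm (f x) \<le> norm (K * (1 / (1 + x)^2))"
    proof (rule AE_I2, rule impI)
      fix x :: real assume "x \<in> {0<..}"
      then have "norm (f x) \<le> K / (1 + x)^2" using K by simp
      also have "\<dots> \<le> norm (K * (1 / (1 + x)^2))" by simp (intro divide_right_mono, auto)
      finally show "norm (f x) \<le> norm (K * (1 / (1 + x)^2))" .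
    qed
  qed
qed

lemma quadratic_decay_scaled_limits:
  fixes g :: "real \<Rightarrow> 'a::real_normed_vector"
  assumes "quadratic_decay g"
  shows "((\<lambda>s. s *\<^sub>R g s) \<longlongrightarrow> 0) (at_right 0)" "((\<lambda>s. s *\<^sub>R g s) \<longlongrightarrow> 0) at_top"
proof -
  obtain K where K: "\<And>s. 0 < s \<Longrightarrow> norm (g s) \<le> K / (1 + s)^2"
    using assms unfolding quadratic_decay_def by blast
  have bound: "norm (s *\<^sub>R g s) \<le> s * K / (1 + s)^2" if "0 < s" for s
    using mult_left_mono[OF K[OF that], of s] that by simp
  show "((\<lambda>s. s *\<^sub>R g s) \<longlongrightarrow> 0) (at_right 0)"
  proof (rule Lim_null_comparison)
    show "\<forall>\<^sub>F s in at_right 0. norm (s *\<^sub>R g s) \<le> s * K / (1 + s)^2"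
      using eventually_at_right_less[of "0::real"] by eventually_elim (rule bound)
    show "((\<lambda>s::real. s * K / (1 + s)^2) \<longlongrightarrow> 0) (at_right 0)"
      by (rule tendsto_eq_intros refl | simp)+
  qed
  show "((\<lambda>s. s *\<^sub>R g s) \<longlongrightarrow> 0) at_top"
  proof (rule Lim_null_comparison)
    show "\<forall>\<^sub>F s in at_top. norm (s *\<^sub>R g s) \<le> s * K / (1 + s)^2"
      using eventually_gt_at_top[of "0::real"] by eventually_elim (rule bound)
    show "((\<lambda>s::real. s * K / (1 + s)^2) \<longlongrightarrow> 0) at_top"
      by real_asymp
  qed
qed

lemma integral_bounded_linear_commute:
  fixes f :: "real \<Rightarrow> 'a::euclidean_space" and T :: "'a \<Rightarrow> 'b::euclidean_space"
  assumes "set_integrable lborel {0<..} f" "bounded_linear T"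
  shows "T (integral {0<..} f) = integral {0<..} (\<lambda>s. T (f s))"
    and "(\<lambda>s. T (f s)) integrable_on {0<..}"
  using integral_linear[OF set_borel_integral_eq_integral(1)[OF assms(1)] assms(2)]
    integrable_linear[OF set_borel_integral_eq_integral(1)[OF assms(1)] assms(2)]
  by (simp_all add: comp_def)

section \<open>The trace identity for a supported pair\<close>

locale supported_pair =
  fixes M A :: "complex^'n^'n"
  assumes psd_M: "psd M" and hermitian_A: "mat_adj A = A"
    and kernel_M_A: "\<And>x. M *v x = 0 \<Longrightarrow> A *v x = 0"
begin

abbreviation R :: "real \<Rightarrow> complex^'n^'n" where "R \<equiv> resolv M"

definition Q :: "complex^'n^'n" where
  "Q = (SOME Q. M ** M ** Q = M \<and> M ** Q = Q ** M \<and> mat_adj Q = Q)"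

lemma Q: "M ** M ** Q = M" "M ** Q = Q ** M" "mat_adj Q = Q"
  using someI_ex[OF hermitian_pseudo_inverse[OF psd_hermitian[OF psd_M]]] unfolding Q_def by auto

lemma A_support: "A ** (M ** Q) = A" "(M ** Q) ** A = A"
proof -
  have "M ** (mat 1 - M ** Q) = 0" using Q(1) by (simp add: matrix_ring_simps matrix_mul_assoc)
  then have "A *v ((mat 1 - M ** Q) *v x) = 0" for x
    using kernel_M_A by (metis matrix_vector_mul_assoc matrix_vector_mult_0)
  then have "A ** (mat 1 - M ** Q) = 0"
    by (metis matrix_eq matrix_vector_mul_assoc matrix_vector_mult_0 times0_left)
  then show AMQ: "A ** (M ** Q) = A" by (simp add: matrix_ring_simps)
  have "mat_adj (A ** (M ** Q)) = mat_adj A" using AMQ by simp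
  then show "(M ** Q) ** A = A"
    by (simp add: mat_adj_mult hermitian_A Q(2,3) psd_hermitian[OF psd_M])
qed

text \<open>R s M = I - s R s is bounded uniformly in s > 0; hence so is A R s = (A Q) (M R s).\<close>
lemma RM_bounded: obtains B where "\<And>s. 0 < s \<Longrightarrow> norm (R s ** M) \<le> B"
proof
  fix s :: real assume s: "0 < s"
  have "norm (R s ** M) \<le> norm (mat 1 :: complex^'n^'n) + s * norm (R s)"
    using norm_triangle_ineq4[of "mat 1" "s *\<^sub>R R s"] s by (simp add: resolv_absorb[OF psd_M s])
  also have "s * norm (R s) \<le> real CARD('n) * real CARD('n)"
    using resolv_norm_bound[OF psd_M s] s by (simp add: field_simps)
  finally show "norm (R s ** M) \<le> norm (mat 1 :: complex^'n^'n) + real CARD('n) * real CARD('n)"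
    by simp
qed

lemma AR_bounded: obtains B where "\<And>s. 0 < s \<Longrightarrow> norm (A ** R s) \<le> B"
proof -
  obtain K where K: "\<And>(X::complex^'n^'n) (Y::complex^'n^'n) a b. norm X \<le> a \<Longrightarrow> norm Y \<le> b \<Longrightarrow> norm (X ** Y) \<le> a * b * K"
    using matrix_mult_norm_bound by blast
  obtain B where B: "\<And>s. 0 < s \<Longrightarrow> norm (R s ** M) \<le> B" using RM_bounded by blast
  have "norm (A ** R s) \<le> norm (A ** Q) * B * K" if "0 < s" for s
  proof -
    have "A ** R s = (A ** Q) ** (M ** R s)"
      using A_support(1) Q(2) by (metis matrix_mul_assoc)
    also have "M ** R s = R s ** M"
      using resolv_absorb[OF psd_M that] by simp
    finally show ?thesis using K[OF order_refl B[OF that]] by simp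
  qed
  then show ?thesis using that by blast
qed

definition T_integrand :: "real \<Rightarrow> complex^'n^'n" where
  "T_integrand s = R s ** A ** R s"

definition R_integrand :: "real \<Rightarrow> complex^'n^'n" where
  "R_integrand s = R s ** A ** R s ** A ** R s"

text \<open>The integrand of T_M(A) decays: bounded near 0 since R s A R s = (R s M) Q (A R s),
  and O(1/s^2) at \<infinity> since R s = O(1/s).\<close>
lemma T_integrand_decay: "quadratic_decay T_integrand"
proof -
  obtain K where K: "\<And>(X::complex^'n^'n) (Y::complex^'n^'n) a b. norm X \<le> a \<Longrightarrow> norm Y \<le> b \<Longrightarrow> norm (X ** Y) \<le> a * b * K"
    using matrix_mult_norm_bound by blast
  obtain B1 where B1: "\<And>s. 0 < s \<Longrightarrow> norm (R s ** M) \<le> B1" using RM_bounded by blast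
  obtain B2 where B2: "\<And>s. 0 < s \<Longrightarrow> norm (A ** R s) \<le> B2" using AR_bounded by blast
  define c where "c = real CARD('n) * real CARD('n)"
  show ?thesis
  proof (rule quadratic_decayI)
    fix s :: real assume s: "0 < s"
    have "T_integrand s = R s ** ((M ** Q) ** A) ** R s"
      by (simp add: T_integrand_def A_support(2))
    also have "\<dots> = (R s ** M) ** (Q ** (A ** R s))"
      by (simp add: matrix_mul_assoc)
    finally have "T_integrand s = (R s ** M) ** (Q ** (A ** R s))" .
    then show "norm (T_integrand s) \<le> B1 * (norm Q * B2 * K) * K"
      using K[OF B1[OF s] K[OF order_refl B2[OF s]]] by simp
  next
    fix s :: real assume s: "1 \<le> s"
    then have R: "norm (R s) \<le> c / s" using resolv_norm_bound[OF psd_M] by (simp add: c_def)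
    have "norm (T_integrand s) \<le> (c / s * norm A * K) * (c / s) * K"
      unfolding T_integrand_def by (intro K R order_refl)
    also have "\<dots> = (c * norm A * K * c * K) / s^2"
      by (simp add: power2_eq_square field_simps)
    finally show "norm (T_integrand s) \<le> (c * norm A * K * c * K) / s^2" .
  qed
qed

text \<open>The integrand of R_M(A) is that of T_M(A) times the bounded factor A R s.\<close>
lemma R_integrand_decay: "quadratic_decay R_integrand"
proof -
  obtain B where "\<And>s. 0 < s \<Longrightarrow> norm (A ** R s) \<le> B" using AR_bounded by blast
  then have "quadratic_decay (\<lambda>s. T_integrand s ** (A ** R s))"
    by (intro quadratic_decay_bilinear[OF bounded_bilinear_matrix_mult T_integrand_decay])
  moreover have "R_integrand = (\<lambda>s. T_integrand s ** (A ** R s))"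
    by (simp add: fun_eq_iff R_integrand_def T_integrand_def matrix_mul_assoc)
  ultimately show ?thesis by simp
qed

lemma integrands_continuous:
  assumes "0 < s" shows "isCont T_integrand s" "isCont R_integrand s"
  unfolding isCont_def T_integrand_def[abs_def] R_integrand_def[abs_def]
  by (intro bounded_bilinear.tendsto[OF bounded_bilinear_matrix_mult] tendsto_const
      resolv_continuous[OF psd_M assms])+

lemma T_integrand_integrable: "set_integrable lborel {0<..} T_integrand"
  using quadratic_decay_integrable[OF _ T_integrand_decay] integrands_continuous(1) by blast

lemma R_integrand_integrable: "set_integrable lborel {0<..} R_integrand"
  using quadratic_decay_integrable[OF _ R_integrand_decay] integrands_continuous(2) by blast

definition primitive :: "real \<Rightarrow> complex" where
  "primitive s = s *\<^sub>R trace ((A ** R s) ** (A ** R s))"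

definition integrand_difference :: "real \<Rightarrow> complex" where
  "integrand_difference s = 2 *\<^sub>R trace (M ** R_integrand s) - trace (A ** T_integrand s)"

lemma trace_cyclic_terms:
  "trace (A ** R s ** A ** R s ** R s) = trace (R s ** A ** R s ** A ** R s)"
  "trace (A ** R s ** R s ** A ** R s) = trace (R s ** A ** R s ** A ** R s)"
proof -
  show "trace (A ** R s ** A ** R s ** R s) = trace (R s ** A ** R s ** A ** R s)"
    using trace_mul_sym[of "A ** R s ** A ** R s" "R s"] by (simp add: matrix_mul_assoc)
  have "trace (A ** R s ** R s ** A ** R s) = trace (R s ** R s ** A ** R s ** A)"
    using trace_mul_sym[of A "R s ** R s ** A ** R s"] by (simp add: matrix_mul_assoc)
  also have "\<dots> = trace (R s ** A ** R s ** A ** R s)"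
    using trace_mul_sym[of "R s" "R s ** A ** R s ** A"] by (simp add: matrix_mul_assoc)
  finally show "trace (A ** R s ** R s ** A ** R s) = trace (R s ** A ** R s ** A ** R s)" .
qed

lemma primitive_derivative:
  assumes s: "0 < s" shows "(primitive has_vector_derivative integrand_difference s) (at s)"
proof -
  let ?D = "- (R s ** R s)"
  let ?\<tau> = "trace (R s ** A ** R s ** A ** R s)" and ?\<phi> = "trace (A ** R s ** A ** R s)"
  have dAR: "((\<lambda>t. A ** R t) has_vector_derivative (A ** ?D)) (at s)"
    by (rule bounded_linear.has_vector_derivative[OF
          bounded_bilinear.bounded_linear_right[OF bounded_bilinear_matrix_mult]
          resolv_derivative[OF psd_M s]])
  have "((\<lambda>t. trace ((A ** R t) ** (A ** R t))) has_vector_derivative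
      trace ((A ** R s) ** (A ** ?D) + (A ** ?D) ** (A ** R s))) (at s)"
    by (rule bounded_linear.has_vector_derivative[OF bounded_linear_trace
          bounded_bilinear.has_vector_derivative[OF bounded_bilinear_matrix_mult dAR dAR]])
  then have deriv: "(primitive has_vector_derivative
      s *\<^sub>R trace ((A ** R s) ** (A ** ?D) + (A ** ?D) ** (A ** R s))
      + 1 *\<^sub>R trace ((A ** R s) ** (A ** R s))) (at s)"
    unfolding primitive_def[abs_def] by (intro has_vector_derivative_scaleR DERIV_ident)
  have cyclic: "trace ((A ** R s) ** (A ** ?D) + (A ** ?D) ** (A ** R s)) = - 2 * ?\<tau>"
    using trace_cyclic_terms
    by (simp add: matrix_ring_simps matrix_mul_assoc trace_add trace_sub trace_uminus)
  have square: "trace ((A ** R s) ** (A ** R s)) = ?\<phi>"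
    by (simp add: matrix_mul_assoc)
  have trace_M: "trace (M ** R_integrand s) = ?\<phi> - s *\<^sub>R ?\<tau>"
  proof -
    have "M ** R_integrand s = (M ** R s) ** A ** R s ** A ** R s"
      by (simp add: R_integrand_def matrix_mul_assoc)
    then show ?thesis
      by (simp add: resolv_absorb(1)[OF psd_M s] matrix_ring_simps trace_sub trace_scaleR
          matrix_mul_assoc)
  qed
  have trace_A: "trace (A ** T_integrand s) = ?\<phi>"
    by (simp add: T_integrand_def matrix_mul_assoc)
  have "integrand_difference s = s *\<^sub>R (- 2 * ?\<tau>) + 1 *\<^sub>R ?\<phi>"
    unfolding integrand_difference_def trace_M trace_A
    by (simp add: scaleR_conv_of_real algebra_simps)
  then show ?thesis using deriv unfolding cyclic square by simp
qed

lemma integrand_difference_continuous: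
  assumes "0 < s" shows "isCont integrand_difference s"
proof -
  have "isCont (\<lambda>s. trace (M ** R_integrand s)) s" "isCont (\<lambda>s. trace (A ** T_integrand s)) s"
    using integrands_continuous[OF assms]
    by (simp_all add: isCont_def bounded_linear.tendsto[OF bounded_linear_trace_mult])
  then show ?thesis
    unfolding integrand_difference_def[abs_def] by (intro continuous_intros)
qed

lemma integrand_difference_integrable: "set_integrable lborel {0<..} integrand_difference"
proof (rule quadratic_decay_integrable[OF integrand_difference_continuous])
  have "bounded_linear (\<lambda>X. 2 *\<^sub>R trace (M ** X))"
    by (rule bounded_linear_compose[OF bounded_linear_scaleR_right bounded_linear_trace_mult])
  then have "quadratic_decay (\<lambda>s. 2 *\<^sub>R trace (M ** R_integrand s))"
    by (rule quadratic_decay_bounded_linear[OF _ R_integrand_decay])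
  moreover have "quadratic_decay (\<lambda>s. trace (A ** T_integrand s))"
    by (rule quadratic_decay_bounded_linear[OF bounded_linear_trace_mult T_integrand_decay])
  ultimately show "quadratic_decay integrand_difference"
    unfolding integrand_difference_def[abs_def] by (rule quadratic_decay_diff)
qed

text \<open>The primitive vanishes at both ends, so the difference integrates to zero.\<close>
lemma integrand_difference_integral: "integral {0<..} integrand_difference = 0"
proof -
  have decay: "quadratic_decay (\<lambda>s. trace (A ** T_integrand s))"
    by (rule quadratic_decay_bounded_linear[OF bounded_linear_trace_mult T_integrand_decay])
  have primitive_eq: "primitive = (\<lambda>s. s *\<^sub>R trace (A ** T_integrand s))"
    by (simp add: primitive_def T_integrand_def matrix_mul_assoc fun_eq_iff)
  have "(LBINT s=0..\<infinity>. integrand_difference s) = 0 - 0"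
  proof (rule interval_integral_FTC_integrable[where F=primitive])
    show "(primitive has_vector_derivative integrand_difference x) (at x)" if "0 < ereal x" for x
      using that by (intro primitive_derivative) simp
    show "isCont integrand_difference x" if "0 < ereal x" for x
      using that by (intro integrand_difference_continuous) simp
    show "set_integrable lborel (einterval 0 \<infinity>) integrand_difference"
      using integrand_difference_integrable by (simp add: zero_ereal_def)
    show "((primitive \<circ> real_of_ereal) \<longlongrightarrow> 0) (at_right 0)"
      using quadratic_decay_scaled_limits(1)[OF decay]
      unfolding primitive_eq zero_ereal_def ereal_tendsto_simps .
    show "((primitive \<circ> real_of_ereal) \<longlongrightarrow> 0) (at_left \<infinity>)"
      using quadratic_decay_scaled_limits(2)[OF decay]
      unfolding primitive_eq ereal_tendsto_simps .
  qed auto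
  then have "(LINT s:{0<..}|lborel. integrand_difference s) = 0"
    by (simp add: interval_lebesgue_integral_0_infty)
  then show ?thesis
    using set_borel_integral_eq_integral(2)[OF integrand_difference_integrable] by simp
qed

theorem trace_identity: "trace (M ** Rmap M A) = trace (A ** Tmap M A)"
proof -
  note R_int = integral_bounded_linear_commute[OF R_integrand_integrable bounded_linear_trace_mult]
  note T_int = integral_bounded_linear_commute[OF T_integrand_integrable bounded_linear_trace_mult]
  have T: "Tmap M A = integral {0<..} T_integrand"
    unfolding Tmap_def T_integrand_def[abs_def] ..
  have R: "Rmap M A = 2 *\<^sub>R integral {0<..} R_integrand"
    unfolding Rmap_def R_integrand_def[abs_def] ..
  have "trace (M ** Rmap M A) - trace (A ** Tmap M A)
      = integral {0<..} (\<lambda>s. 2 *\<^sub>R trace (M ** R_integrand s))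
        - integral {0<..} (\<lambda>s. trace (A ** T_integrand s))"
    unfolding T R matrix_scaleR_right trace_scaleR R_int(1) T_int(1) integral_cmul ..
  also have "\<dots> = integral {0<..} integrand_difference"
    unfolding integrand_difference_def
    by (rule integral_diff[symmetric]) (simp_all add: integrable_cmul R_int T_int)
  finally show ?thesis using integrand_difference_integral by simp
qed

end

theorem lemma4:
  fixes A B :: "complex^'n^'n"
  assumes "psd A" and "psd B"
  shows "trace ((A + B) ** Rmap (A + B) A) \<ge> trace (A ** Tmap (A + B) A)"
proof -
  interpret supported_pair "A + B" A
    using assms psd_add psd_hermitian psd_sum_kernel by unfold_locales blast+
  show ?thesis by (simp add: trace_identity)
qed

end
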